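(* Under the standing assumptions, $G$ does not contain a vertex $v$ of degree $8$ together with pairwise distinct neighbours $u,w,y,z,t$ of $v$ and a vertex $x\notin\{v,u,w,y,z,t\}$ such that $d(u)=2$, $d(w)=d(z)=3$, $x$ is adjacent to both $u$ and $w$, and $wy,zt\in E(G)$.
   Context: Standing assumptions: A total $9$-coloring of a graph is an assignment of colors from $\{1,\dots,9\}$ to the vertices and edges such that adjacent vertices, edges sharing an endpoint, and a vertex and an incident edge receive different colors. A $4$-fan is the graph on six vertices $c,u_1,\dots,u_5$ with edges $cu_j$ ($1\le j\le5$) and $u_ju_{j+1}$ ($1\le j\le4$). $G$ is a minimal counterexample: $G$ is a simple planar graph with maximum degree $8$, containing no subgraph isomorphic to a $4$-fan, that has no total $9$-coloring, and such that every simple planar graph $H$ with maximum degree at most $8$, no subgraph isomorphic to a $4$-fan, and $|V(H)|+|E(H)|<|V(G)|+|E(G)|$ has a total $9$-coloring. $d(\cdot)$ denotes degree in $G$. *)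

theory Defs
  imports "HOL-Analysis.Analysis"
begin

definition simple_graph :: "'a set \<Rightarrow> 'a set set \<Rightarrow> bool" where
  "simple_graph V E \<longleftrightarrow> finite V \<and> (\<forall>e\<in>E. e \<subseteq> V \<and> card e = 2)"

definition adj :: "'a set set \<Rightarrow> 'a \<Rightarrow> 'a \<Rightarrow> bool" where
  "adj E u v \<longleftrightarrow> {u, v} \<in> E"

definition degree :: "'a set set \<Rightarrow> 'a \<Rightarrow> nat" where
  "degree E v = card {e \<in> E. v \<in> e}"

definition max_degree_le :: "'a set \<Rightarrow> 'a set set \<Rightarrow> nat \<Rightarrow> bool" where
  "max_degree_le V E k \<longleftrightarrow> (\<forall>v\<in>V. degree E v \<le> k)"

definition max_degree_eq :: "'a set \<Rightarrow> 'a set set \<Rightarrow> nat \<Rightarrow> bool" where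
  "max_degree_eq V E k \<longleftrightarrow> max_degree_le V E k \<and> (\<exists>v\<in>V. degree E v = k)"

text \<open>Planarity: a drawing in the plane (identified with the complex plane), vertices
  mapped injectively to points, each edge drawn as an arc joining its endpoints which
  meets the vertex points only at its endpoints, and two distinct edges meet only in
  the images of common endpoints.\<close>
definition planar :: "'a set \<Rightarrow> 'a set set \<Rightarrow> bool" where
  "planar V E \<longleftrightarrow> (\<exists>(p :: 'a \<Rightarrow> complex) (\<gamma> :: 'a set \<Rightarrow> real \<Rightarrow> complex).
      inj_on p V \<and>
      (\<forall>e\<in>E. arc (\<gamma> e) \<and> {pathstart (\<gamma> e), pathfinish (\<gamma> e)} = p ` e \<and>
               path_image (\<gamma> e) \<inter> p ` V = p ` e) \<and>
      (\<forall>e\<in>E. \<forall>e'\<in>E. e \<noteq> e' \<longrightarrow> path_image (\<gamma> e) \<inter> path_image (\<gamma> e') \<subseteq> p ` (e \<inter> e')))"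

text \<open>Contains a subgraph isomorphic to the 4-fan (not necessarily induced).\<close>
definition has_4fan :: "'a set \<Rightarrow> 'a set set \<Rightarrow> bool" where
  "has_4fan V E \<longleftrightarrow> (\<exists>c u1 u2 u3 u4 u5.
      distinct [c, u1, u2, u3, u4, u5] \<and> set [c, u1, u2, u3, u4, u5] \<subseteq> V \<and>
      adj E c u1 \<and> adj E c u2 \<and> adj E c u3 \<and> adj E c u4 \<and> adj E c u5 \<and>
      adj E u1 u2 \<and> adj E u2 u3 \<and> adj E u3 u4 \<and> adj E u4 u5)"

definition total_coloring :: "'a set \<Rightarrow> 'a set set \<Rightarrow> nat \<Rightarrow> ('a \<Rightarrow> nat) \<Rightarrow> ('a set \<Rightarrow> nat) \<Rightarrow> bool" where
  "total_coloring V E k f g \<longleftrightarrow>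
     (\<forall>v\<in>V. f v \<in> {1..k}) \<and> (\<forall>e\<in>E. g e \<in> {1..k}) \<and>
     (\<forall>u\<in>V. \<forall>v\<in>V. adj E u v \<longrightarrow> f u \<noteq> f v) \<and>
     (\<forall>e\<in>E. \<forall>e'\<in>E. e \<noteq> e' \<and> e \<inter> e' \<noteq> {} \<longrightarrow> g e \<noteq> g e') \<and>
     (\<forall>e\<in>E. \<forall>v\<in>e. f v \<noteq> g e)"

definition total_colorable :: "'a set \<Rightarrow> 'a set set \<Rightarrow> nat \<Rightarrow> bool" where
  "total_colorable V E k \<longleftrightarrow> (\<exists>f g. total_coloring V E k f g)"

text \<open>Minimal counterexample. Competing graphs H are taken on vertex type nat, which
  loses no generality since every finite graph is isomorphic to one on nat.\<close>
definition minimal_counterexample :: "'a set \<Rightarrow> 'a set set \<Rightarrow> bool" where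
  "minimal_counterexample V E \<longleftrightarrow>
     simple_graph V E \<and> planar V E \<and> max_degree_eq V E 8 \<and> \<not> has_4fan V E \<and>
     \<not> total_colorable V E 9 \<and>
     (\<forall>(VH :: nat set) EH. simple_graph VH EH \<and> planar VH EH \<and> max_degree_le VH EH 8 \<and>
        \<not> has_4fan VH EH \<and> card VH + card EH < card V + card E \<longrightarrow> total_colorable VH EH 9)"

end

(* Delete the edge uv. By minimality, G - uv has a total 9-coloring (after copying it onto
   nat, the vertex type of the competitors in minimal_counterexample). The vertices u, w, z are
   pairwise non-adjacent and have degree at most 3, so their colors can be erased and chosen
   again at the end, each having at most 6 forbidden colors. It remains to color the edges.
   As v has degree 7 in G - uv, some color m is missing at v. If m is not on xu, then uv gets m.
   Otherwise m is moved onto one of vw, vy, vz, vt and uv takes the color freed there; before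
   that it may be necessary to exchange the colors of xu and xw, of vy and wy, or of vt and zt,
   which leaves the sets of colors at x, y and t unchanged. *)

theory Submission
  imports Defs
begin

section \<open>Stars and total colorings\<close>

definition star :: "'a set set \<Rightarrow> 'a \<Rightarrow> 'a set set" where
  "star E p = {e \<in> E. p \<in> e}"

definition neighbors :: "'a set set \<Rightarrow> 'a \<Rightarrow> 'a set" where
  "neighbors E p = {q. adj E p q}"

lemma degree_eq_card_star: "degree E p = card (star E p)"
  by (simp add: degree_def star_def)

lemma adj_commute: "adj E p q \<longleftrightarrow> adj E q p"
  by (simp add: adj_def insert_commute)

lemma simple_graph_finite_edges:
  assumes "simple_graph V E"
  shows "finite E"
proof (rule finite_subset)
  show "E \<subseteq> Pow V" using assms by (auto simp: simple_graph_def)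
  show "finite (Pow V)" using assms by (simp add: simple_graph_def)
qed

lemma simple_graph_edge_vertices:
  assumes "simple_graph V E" "{p, q} \<in> E"
  shows "p \<in> V" "q \<in> V" "p \<noteq> q"
  using assms by (auto simp: simple_graph_def)

lemma card_neighbors_le_degree:
  assumes "finite E"
  shows "card (neighbors E p) \<le> degree E p"
proof -
  have "inj_on (\<lambda>q. {p, q}) (neighbors E p)"
    by (rule inj_onI) (auto simp: doubleton_eq_iff)
  moreover have "(\<lambda>q. {p, q}) ` neighbors E p \<subseteq> star E p"
    by (auto simp: neighbors_def star_def adj_def)
  moreover have "finite (star E p)"
    using assms by (simp add: star_def)
  ultimately show ?thesis
    unfolding degree_eq_card_star by (rule card_inj_on_le)
qed

lemma neighbors_subset: "simple_graph V E \<Longrightarrow> neighbors E p \<subseteq> V"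
  by (auto simp: neighbors_def adj_def simple_graph_def)

lemma star_eq_if_card:
  assumes "finite E" "A \<subseteq> star E p" "card A = degree E p"
  shows "star E p = A"
  using assms card_subset_eq[of "star E p" A] by (simp add: degree_eq_card_star star_def)

lemma exists_color_not_in:
  assumes "finite F" "card F < k"
  obtains c :: nat where "c \<in> {1..k}" "c \<notin> F"
proof -
  have "\<not> {1..k} \<subseteq> F"
    using assms card_mono[OF assms(1), of "{1..k}"] by auto
  then show ?thesis using that by blast
qed

lemma total_coloring_iff_stars:
  assumes "simple_graph V E"
  shows "total_coloring V E k f g \<longleftrightarrow>
    (\<forall>p\<in>V. f p \<in> {1..k}) \<and> (\<forall>e\<in>E. g e \<in> {1..k}) \<and>
    (\<forall>p\<in>V. \<forall>q\<in>V. adj E p q \<longrightarrow> f p \<noteq> f q) \<and>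
    (\<forall>p\<in>V. inj_on g (star E p) \<and> f p \<notin> g ` star E p)"
proof -
  have edges_in_V: "e \<subseteq> V" if "e \<in> E" for e
    using assms that by (simp add: simple_graph_def)
  have "(\<forall>e\<in>E. \<forall>e'\<in>E. e \<noteq> e' \<and> e \<inter> e' \<noteq> {} \<longrightarrow> g e \<noteq> g e') \<longleftrightarrow>
        (\<forall>p\<in>V. inj_on g (star E p))"
  proof
    assume "\<forall>e\<in>E. \<forall>e'\<in>E. e \<noteq> e' \<and> e \<inter> e' \<noteq> {} \<longrightarrow> g e \<noteq> g e'"
    then show "\<forall>p\<in>V. inj_on g (star E p)"
      unfolding inj_on_def star_def by blast
  next
    assume inj: "\<forall>p\<in>V. inj_on g (star E p)"
    show "\<forall>e\<in>E. \<forall>e'\<in>E. e \<noteq> e' \<and> e \<inter> e' \<noteq> {} \<longrightarrow> g e \<noteq> g e'"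
    proof (intro ballI impI)
      fix e e' assume "e \<in> E" "e' \<in> E" "e \<noteq> e' \<and> e \<inter> e' \<noteq> {}"
      then obtain p where "p \<in> V" "e \<in> star E p" "e' \<in> star E p" "e \<noteq> e'"
        using edges_in_V by (auto simp: star_def)
      then show "g e \<noteq> g e'" using inj by (meson inj_onD)
    qed
  qed
  moreover have "(\<forall>e\<in>E. \<forall>p\<in>e. f p \<noteq> g e) \<longleftrightarrow> (\<forall>p\<in>V. f p \<notin> g ` star E p)"
    using edges_in_V by (auto simp: star_def)
  ultimately show ?thesis unfolding total_coloring_def by (simp add: ball_conj_distrib)
qed

section \<open>Edge-deleted subgraphs and copies on nat\<close>

lemma simple_graph_mono: "simple_graph V E \<Longrightarrow> E' \<subseteq> E \<Longrightarrow> simple_graph V E'"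
  by (auto simp: simple_graph_def)

lemma planar_mono:
  assumes "planar V E" "E' \<subseteq> E"
  shows "planar V E'"
proof -
  obtain p :: "'a \<Rightarrow> complex" and \<gamma> where
    "inj_on p V" and
    "\<forall>e\<in>E. arc (\<gamma> e) \<and> {pathstart (\<gamma> e), pathfinish (\<gamma> e)} = p ` e \<and>
               path_image (\<gamma> e) \<inter> p ` V = p ` e" and
    "\<forall>e\<in>E. \<forall>e'\<in>E. e \<noteq> e' \<longrightarrow> path_image (\<gamma> e) \<inter> path_image (\<gamma> e') \<subseteq> p ` (e \<inter> e')"
    using assms(1) unfolding planar_def by blast
  with assms(2) have "inj_on p V \<and>
      (\<forall>e\<in>E'. arc (\<gamma> e) \<and> {pathstart (\<gamma> e), pathfinish (\<gamma> e)} = p ` e \<and>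
               path_image (\<gamma> e) \<inter> p ` V = p ` e) \<and>
      (\<forall>e\<in>E'. \<forall>e'\<in>E'. e \<noteq> e' \<longrightarrow> path_image (\<gamma> e) \<inter> path_image (\<gamma> e') \<subseteq> p ` (e \<inter> e'))"
    by (simp add: subset_iff)
  then show ?thesis
    unfolding planar_def by blast
qed

lemma degree_mono: "finite E \<Longrightarrow> E' \<subseteq> E \<Longrightarrow> degree E' p \<le> degree E p"
  unfolding degree_def by (rule card_mono) auto

lemma max_degree_le_mono:
  "simple_graph V E \<Longrightarrow> max_degree_le V E k \<Longrightarrow> E' \<subseteq> E \<Longrightarrow> max_degree_le V E' k"
  unfolding max_degree_le_def
  by (meson degree_mono le_trans simple_graph_finite_edges)

lemma has_4fan_embedding:
  assumes "has_4fan V' E'" "inj_on k V'" "k ` V' \<subseteq> V"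
    and "\<And>a b. a \<in> V' \<Longrightarrow> b \<in> V' \<Longrightarrow> adj E' a b \<Longrightarrow> adj E (k a) (k b)"
  shows "has_4fan V E"
proof -
  obtain c u1 u2 u3 u4 u5 where
    "distinct [c, u1, u2, u3, u4, u5]" "set [c, u1, u2, u3, u4, u5] \<subseteq> V'" and
    "adj E' c u1" "adj E' c u2" "adj E' c u3" "adj E' c u4" "adj E' c u5" and
    "adj E' u1 u2" "adj E' u2 u3" "adj E' u3 u4" "adj E' u4 u5"
    using assms(1) unfolding has_4fan_def by blast
  note fan = this
  show ?thesis
    unfolding has_4fan_def
    by (rule exI[of _ "k c"], rule exI[of _ "k u1"], rule exI[of _ "k u2"],
        rule exI[of _ "k u3"], rule exI[of _ "k u4"], rule exI[of _ "k u5"])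
       (use fan assms(2-4) in \<open>auto simp: inj_on_eq_iff\<close>)
qed

lemma has_4fan_mono: "has_4fan V E' \<Longrightarrow> E' \<subseteq> E \<Longrightarrow> has_4fan V E"
  using has_4fan_embedding[of V E' id V E] by (auto simp: adj_def)

lemma simple_graph_image:
  assumes "simple_graph V E" "inj_on h V"
  shows "simple_graph (h ` V) ((`) h ` E)"
  using assms unfolding simple_graph_def
  by (auto simp: card_image[OF inj_on_subset[OF assms(2)]])

lemma card_edges_image:
  assumes "simple_graph V E" "inj_on h V"
  shows "card ((`) h ` E) = card E"
  using assms inj_on_image_Pow[of h V]
  by (intro card_image) (auto simp: simple_graph_def intro: inj_on_subset)

lemma max_degree_le_image:
  assumes "simple_graph V E" "inj_on h V" "max_degree_le V E k"
  shows "max_degree_le (h ` V) ((`) h ` E) k"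
  unfolding max_degree_le_def
proof
  fix p' assume "p' \<in> h ` V"
  then obtain p where p: "p \<in> V" "p' = h p" by blast
  have edges_in_V: "\<And>e. e \<in> E \<Longrightarrow> e \<subseteq> V"
    using assms(1) by (simp add: simple_graph_def)
  have "{e' \<in> (`) h ` E. h p \<in> e'} = (`) h ` {e \<in> E. p \<in> e}"
    using inj_on_image_mem_iff[OF assms(2) p(1)] edges_in_V by blast
  moreover have "inj_on ((`) h) {e \<in> E. p \<in> e}"
    using inj_on_image_Pow[OF assms(2)] edges_in_V by (auto intro: inj_on_subset)
  ultimately have "degree ((`) h ` E) p' = degree E p"
    by (simp add: degree_def card_image p(2))
  then show "degree ((`) h ` E) p' \<le> k"
    using assms(3) p unfolding max_degree_le_def by simp
qed

lemma planar_image: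
  assumes "simple_graph V E" "inj_on h V" "planar V E"
  shows "planar (h ` V) ((`) h ` E)"
proof -
  obtain p :: "'a \<Rightarrow> complex" and \<gamma> where
    inj: "inj_on p V" and
    arcs: "\<forall>e\<in>E. arc (\<gamma> e) \<and> {pathstart (\<gamma> e), pathfinish (\<gamma> e)} = p ` e \<and>
               path_image (\<gamma> e) \<inter> p ` V = p ` e" and
    crossing: "\<forall>e\<in>E. \<forall>e'\<in>E. e \<noteq> e' \<longrightarrow> path_image (\<gamma> e) \<inter> path_image (\<gamma> e') \<subseteq> p ` (e \<inter> e')"
    using assms(3) unfolding planar_def by blast
  define k where "k = inv_into V h"
  have edges_in_V: "\<And>e. e \<in> E \<Longrightarrow> e \<subseteq> V"
    using assms(1) by (simp add: simple_graph_def)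
  have pk: "(p \<circ> k) ` h ` A = p ` A" if "A \<subseteq> V" for A
    using that assms(2) unfolding k_def by (metis image_comp inv_into_image_cancel)
  have \<gamma>k: "\<gamma> (k ` h ` e) = \<gamma> e" if "e \<in> E" for e
    using that edges_in_V assms(2) by (simp add: k_def)
  have inj': "inj_on (p \<circ> k) (h ` V)"
    using inj assms(2) by (auto simp: k_def intro: comp_inj_on inj_on_inv_into)
  have arcs': "arc (\<gamma> (k ` h ` e)) \<and>
      {pathstart (\<gamma> (k ` h ` e)), pathfinish (\<gamma> (k ` h ` e))} = (p \<circ> k) ` h ` e \<and>
      path_image (\<gamma> (k ` h ` e)) \<inter> (p \<circ> k) ` h ` V = (p \<circ> k) ` h ` e" if "e \<in> E" for e
    using arcs that \<gamma>k pk[OF edges_in_V[OF that]] pk[of V] by simp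
  have crossing': "path_image (\<gamma> (k ` h ` d1)) \<inter> path_image (\<gamma> (k ` h ` d2))
      \<subseteq> (p \<circ> k) ` (h ` d1 \<inter> h ` d2)" if "d1 \<in> E" "d2 \<in> E" "h ` d1 \<noteq> h ` d2" for d1 d2
  proof -
    have "h ` d1 \<inter> h ` d2 = h ` (d1 \<inter> d2)"
      using assms(2) edges_in_V that by (simp add: inj_on_image_Int)
    then have "(p \<circ> k) ` (h ` d1 \<inter> h ` d2) = p ` (d1 \<inter> d2)"
      using pk[of "d1 \<inter> d2"] edges_in_V[OF that(1)] by auto
    moreover have "d1 \<noteq> d2"
      using that(3) by blast
    ultimately show ?thesis
      using crossing that(1,2) \<gamma>k by simp
  qed
  show ?thesis
    unfolding planar_def
    by (rule exI[of _ "p \<circ> k"], rule exI[of _ "\<lambda>e'. \<gamma> (k ` e')"])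
       (use inj' arcs' crossing' in blast)
qed

lemma has_4fan_image:
  assumes "simple_graph V E" "inj_on h V" "has_4fan (h ` V) ((`) h ` E)"
  shows "has_4fan V E"
proof (rule has_4fan_embedding[OF assms(3)])
  define k where "k = inv_into V h"
  show "inj_on k (h ` V)" "k ` h ` V \<subseteq> V"
    using assms(2) by (auto simp: k_def inj_on_inv_into)
  show "adj E (k a) (k b)" if ab: "adj ((`) h ` E) a b" for a b
  proof -
    obtain e where "e \<in> E" "{a, b} = h ` e"
      using ab unfolding adj_def by blast
    moreover have "k ` h ` e = e"
      using assms(1,2) \<open>e \<in> E\<close> by (simp add: k_def simple_graph_def)
    ultimately have "{k a, k b} = e"
      by (metis image_insert image_empty)
    then show ?thesis
      using \<open>e \<in> E\<close> by (simp add: adj_def)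
  qed
qed

lemma total_coloring_image:
  assumes "simple_graph V E" "inj_on h V" "total_coloring (h ` V) ((`) h ` E) k f g"
  shows "total_coloring V E k (f \<circ> h) (g \<circ> (`) h)"
proof -
  have "inj_on ((`) h) E"
    using assms(1) inj_on_image_Pow[OF assms(2)]
    by (auto simp: simple_graph_def intro: inj_on_subset)
  moreover have "adj ((`) h ` E) (h p) (h q)" if "adj E p q" for p q
    using that unfolding adj_def by (metis image_empty image_eqI image_insert)
  moreover have "h ` e \<inter> h ` e' \<noteq> {}" if "e \<inter> e' \<noteq> {}" for e e'
    using that by blast
  ultimately show ?thesis
    using assms(3) unfolding total_coloring_def by (simp add: inj_on_eq_iff)
qed

lemma minimal_counterexample_subgraph_colorable:
  assumes mc: "minimal_counterexample V E" and sub: "E' \<subset> E"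
  shows "total_colorable V E' 9"
proof -
  have simple: "simple_graph V E" and in_class: "planar V E" "max_degree_le V E 8" "\<not> has_4fan V E"
    and smaller_colorable: "\<And>(VH :: nat set) EH. simple_graph VH EH \<Longrightarrow> planar VH EH \<Longrightarrow>
        max_degree_le VH EH 8 \<Longrightarrow> \<not> has_4fan VH EH \<Longrightarrow> card VH + card EH < card V + card E \<Longrightarrow>
        total_colorable VH EH 9"
    using mc by (auto simp: minimal_counterexample_def max_degree_eq_def)
  have simple': "simple_graph V E'"
    using simple sub by (blast intro: simple_graph_mono)
  obtain h :: "'a \<Rightarrow> nat" where h: "inj_on h V"
    using finite_imp_inj_to_nat_seg[of V] simple unfolding simple_graph_def by blast
  have "card E' < card E"
    using simple sub by (simp add: psubset_card_mono simple_graph_finite_edges)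
  then have "card (h ` V) + card ((`) h ` E') < card V + card E"
    using simple' h by (simp add: card_image card_edges_image)
  moreover have "planar (h ` V) ((`) h ` E')"
    using in_class(1) sub simple' h by (blast intro: planar_image planar_mono)
  moreover have "max_degree_le (h ` V) ((`) h ` E') 8"
    using in_class(2) sub simple simple' h by (blast intro: max_degree_le_image max_degree_le_mono)
  moreover have "\<not> has_4fan (h ` V) ((`) h ` E')"
    using in_class(3) sub simple' h by (blast dest: has_4fan_image has_4fan_mono)
  ultimately have "total_colorable (h ` V) ((`) h ` E') 9"
    using smaller_colorable simple_graph_image[OF simple' h] by blast
  then show ?thesis
    using total_coloring_image[OF simple' h] unfolding total_colorable_def by blast
qed

section \<open>Recoloring\<close>

lemma exists_color_avoiding_neighbors_and_star:
  assumes simple: "simple_graph V E" and low_degree: "2 * degree E a < k"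
  shows "\<exists>c\<in>{1..k}. c \<notin> f ` neighbors E a \<union> g ` star E a"
proof -
  have "finite E"
    using simple by (rule simple_graph_finite_edges)
  moreover have "finite (neighbors E a)"
    using simple neighbors_subset[OF simple] by (auto intro: finite_subset simp: simple_graph_def)
  moreover have "finite (star E a)"
    using \<open>finite E\<close> by (simp add: star_def)
  ultimately have "card (f ` neighbors E a \<union> g ` star E a) \<le> 2 * degree E a"
    using card_neighbors_le_degree[of E a] card_Un_le[of "f ` neighbors E a" "g ` star E a"]
      card_image_le[of "neighbors E a" f] card_image_le[of "star E a" g]
    by (simp add: degree_eq_card_star)
  then show ?thesis
    using low_degree \<open>finite (neighbors E a)\<close> \<open>finite (star E a)\<close>
    by (metis exists_color_not_in finite_Un finite_imageI order_le_less_trans)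
qed

lemma total_colorable_if_recolor_independent:
  assumes simple: "simple_graph V E"
    and independent: "\<forall>a\<in>A. \<forall>b\<in>A. \<not> adj E a b"
    and low_degree: "\<forall>a\<in>A. 2 * degree E a < k"
    and g_range: "\<forall>e\<in>E. g e \<in> {1..k}"
    and g_inj: "\<forall>p\<in>V. inj_on g (star E p)"
    and f_range: "\<forall>p\<in>V - A. f p \<in> {1..k}"
    and f_proper: "\<forall>p\<in>V - A. \<forall>q\<in>V - A. adj E p q \<longrightarrow> f p \<noteq> f q"
    and f_avoids: "\<forall>p\<in>V - A. f p \<notin> g ` star E p"
  shows "total_colorable V E k"
proof -
  have "\<exists>c\<in>{1..k}. c \<notin> f ` neighbors E a \<union> g ` star E a" if "a \<in> A" for a
    using exists_color_avoiding_neighbors_and_star[OF simple] low_degree that by blast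
  then obtain c where c: "\<And>a. a \<in> A \<Longrightarrow> c a \<in> {1..k} \<and> c a \<notin> f ` neighbors E a \<union> g ` star E a"
    by metis
  define f' where "f' p = (if p \<in> A then c p else f p)" for p
  have proper_at_A: "f' p \<noteq> f' q" if "p \<in> A" "adj E p q" for p q
    using that c[of p] independent by (auto simp: f'_def neighbors_def)
  have "total_coloring V E k f' g"
    unfolding total_coloring_iff_stars[OF simple]
  proof (intro conjI ballI impI)
    show "f' p \<in> {1..k}" if "p \<in> V" for p
      using that c f_range by (auto simp: f'_def)
    show "f' p \<noteq> f' q" if "p \<in> V" "q \<in> V" "adj E p q" for p q
      using that proper_at_A[of p q] proper_at_A[of q p] f_proper
      by (cases "p \<in> A \<or> q \<in> A") (auto simp: adj_commute f'_def)
    show "f' p \<notin> g ` star E p" if "p \<in> V" for p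
      using that c f_avoids by (auto simp: f'_def)
  qed (use g_range g_inj in auto)
  then show ?thesis
    unfolding total_colorable_def by blast
qed

lemma image_eq_if_eq_outside:
  assumes "D \<subseteq> S" "g' ` D = g ` D" "\<forall>e\<in>S - D. g' e = g e"
  shows "g' ` S = g ` S"
proof -
  have "S = D \<union> (S - D)"
    using assms(1) by blast
  then show ?thesis
    using assms(2,3) by (metis image_Un image_cong)
qed

(* Variables are named after the edges whose colors they are: ze is the color of the third edge
   at z, m is a color missing at v, and primes mark the new colors. *)
lemma recoloring_choice:
  assumes v: "distinct [vw, vy, vz, vt, m]" and x: "xu \<noteq> xw" and w: "distinct [vw, xw, wy]"
    and y: "vy \<noteq> wy" and z: "distinct [vz, zt, ze]" and t: "vt \<noteq> zt"
  shows "\<exists>uv' vw' vy' vz' vt' xu' xw' wy' zt'.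
    {uv', vw', vy', vz', vt'} = {vw, vy, vz, vt, m} \<and> {xu', xw'} = {xu, xw} \<and>
    {vy', wy'} = {vy, wy} \<and> {vt', zt'} = {vt, zt} \<and>
    uv' \<noteq> xu' \<and> distinct [vw', xw', wy'] \<and> distinct [vz', zt', ze]"
proof -
  have witness: ?thesis
    if "{uv', vw', vy', vz', vt'} = {vw, vy, vz, vt, m}" "{xu', xw'} = {xu, xw}"
      "{vy', wy'} = {vy, wy}" "{vt', zt'} = {vt, zt}"
      "uv' \<noteq> xu'" "distinct [vw', xw', wy']" "distinct [vz', zt', ze]"
    for uv' vw' vy' vz' vt' xu' xw' wy' zt'
    using that by blast
  consider "m \<noteq> xu" | "m = xu" "m \<noteq> wy" | "m = xu" "m = wy" "m \<notin> {zt, ze}"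
    | "m = xu" "m = wy" "vy \<noteq> xw"
    | "m = xu" "m = wy" "xw = vy" "zt = m" "ze \<noteq> vt"
    | "m = xu" "m = wy" "xw = vy" "m \<in> {zt, ze}" "vy \<notin> {zt, ze}"
    | "m = xu" "m = wy" "xw = vy" "zt = vy" "ze = m"
    using v by auto
  then show ?thesis
  proof cases
    case 1
    show ?thesis by (rule witness[of m vw vy vz vt xu xw wy zt]) (use 1 assms in auto)
  next
    case 2
    show ?thesis by (rule witness[of vw m vy vz vt xu xw wy zt]) (use 2 assms in auto)
  next
    case 3
    show ?thesis by (rule witness[of vz vw vy m vt xu xw wy zt]) (use 3 assms in auto)
  next
    case 4
    show ?thesis by (rule witness[of vy vw m vz vt xu xw vy zt]) (use 4 assms in auto)
  next
    case 5
    show ?thesis by (rule witness[of vt vw vy vz m xu xw wy vt]) (use 5 assms in auto)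
  next
    case 6
    show ?thesis by (rule witness[of vw vz m vy vt vy m vy zt]) (use 6 assms in auto)
  next
    case 7
    show ?thesis by (rule witness[of vw vt m vz vy vy m vy vt]) (use 7 assms in auto)
  qed
qed

section \<open>The configuration\<close>

locale degree8_configuration =
  fixes V :: "'a set" and E :: "'a set set" and v u w y z t x :: 'a
  assumes simple: "simple_graph V E"
    and degree_v: "degree E v = 8"
    and distinct_neighbors: "distinct [u, w, y, z, t]"
    and adj_v: "adj E v u" "adj E v w" "adj E v y" "adj E v z" "adj E v t"
    and x_new: "x \<notin> {v, u, w, y, z, t}"
    and degree_u: "degree E u = 2" and degree_w: "degree E w = 3" and degree_z: "degree E z = 3"
    and adj_x: "adj E x u" "adj E x w"
    and adj_wy: "adj E w y" and adj_zt: "adj E z t"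
begin

lemma edges: "{u, v} \<in> E" "{v, w} \<in> E" "{v, y} \<in> E" "{v, z} \<in> E" "{v, t} \<in> E"
  "{x, u} \<in> E" "{x, w} \<in> E" "{w, y} \<in> E" "{z, t} \<in> E"
  using adj_v adj_x adj_wy adj_zt by (simp_all add: adj_def insert_commute)

lemma vertices_distinct: "distinct [v, u, w, y, z, t, x]"
  using distinct_neighbors x_new simple_graph_edge_vertices(3)[OF simple] edges by auto

lemma finite_E: "finite E"
  using simple by (rule simple_graph_finite_edges)

lemma star_u: "star E u = {{u, v}, {x, u}}"
  by (rule star_eq_if_card[OF finite_E])
     (use edges vertices_distinct degree_u in \<open>auto simp: star_def doubleton_eq_iff\<close>)

lemma star_w: "star E w = {{v, w}, {x, w}, {w, y}}"
  by (rule star_eq_if_card[OF finite_E])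
     (use edges vertices_distinct degree_w in \<open>auto simp: star_def doubleton_eq_iff\<close>)

lemma star_z:
  obtains ez where "star E z = {{v, z}, {z, t}, ez}" "ez \<notin> {{v, z}, {z, t}}"
proof -
  have two: "{{v, z}, {z, t}} \<subseteq> star E z" "card {{v, z}, {z, t}} = 2"
    using edges vertices_distinct by (auto simp: star_def doubleton_eq_iff)
  have "\<not> star E z \<subseteq> {{v, z}, {z, t}}"
  proof
    assume "star E z \<subseteq> {{v, z}, {z, t}}"
    then have "degree E z \<le> 2"
      using two(2) card_mono[of "{{v, z}, {z, t}}" "star E z"] by (simp add: degree_eq_card_star)
    then show False
      using degree_z by simp
  qed
  then obtain ez where ez: "ez \<in> star E z" "ez \<notin> {{v, z}, {z, t}}"
    by blast
  have "card (insert ez {{v, z}, {z, t}}) = 3"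
    using two(2) ez(2) by simp
  then have "star E z = {{v, z}, {z, t}, ez}"
    using two ez degree_z star_eq_if_card[OF finite_E, of "insert ez {{v, z}, {z, t}}" z]
    by (simp add: insert_commute)
  with ez show ?thesis
    using that by blast
qed

lemma independent_uwz: "\<forall>a\<in>{u, w, z}. \<forall>b\<in>{u, w, z}. \<not> adj E a b"
proof -
  have not_adj: "\<not> adj E a b" if "a \<in> {u, w}" "b \<in> {u, w, z}" for a b
  proof -
    have "{a, b} \<notin> star E a"
      using that vertices_distinct by (auto simp: star_u star_w doubleton_eq_iff)
    then show ?thesis
      by (simp add: adj_def star_def)
  qed
  moreover have "\<not> adj E z b" if "b \<in> {u, w, z}" for b
    using that not_adj[of b z] simple_graph_edge_vertices(3)[OF simple, of z z]
    by (auto simp: adj_commute adj_def)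
  ultimately show ?thesis
    by blast
qed

definition recolored_edges :: "'a set set" where
  "recolored_edges = {{u, v}, {v, w}, {v, y}, {v, z}, {v, t}, {x, u}, {x, w}, {w, y}, {z, t}}"

lemma star_minus_uv: "p \<noteq> u \<Longrightarrow> p \<noteq> v \<Longrightarrow> star (E - {{u, v}}) p = star E p"
  by (auto simp: star_def)

lemma star_v_insert: "star E v = insert {u, v} (star (E - {{u, v}}) v)"
  using edges by (auto simp: star_def)

lemma card_star_minus_uv_v: "card (star (E - {{u, v}}) v) = 7"
  using degree_v finite_E star_v_insert
  by (simp add: degree_eq_card_star star_def)

lemma total_coloring_minus_uv_stars:
  assumes "total_coloring V (E - {{u, v}}) 9 f g"
  shows "\<forall>e\<in>E - {{u, v}}. g e \<in> {1..9}"
    and "\<forall>p\<in>V. inj_on g (star (E - {{u, v}}) p) \<and> f p \<notin> g ` star (E - {{u, v}}) p"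
  using assms total_coloring_iff_stars[OF simple_graph_mono[OF simple, of "E - {{u, v}}"]]
  by auto

lemma recolored_edges_incident:
  "{e \<in> recolored_edges. x \<in> e} = {{x, u}, {x, w}}"
  "{e \<in> recolored_edges. y \<in> e} = {{v, y}, {w, y}}"
  "{e \<in> recolored_edges. t \<in> e} = {{v, t}, {z, t}}"
  "p \<notin> {u, v, w, x, y, z, t} \<Longrightarrow> {e \<in> recolored_edges. p \<in> e} = {}"
  using vertices_distinct by (auto simp: recolored_edges_def)

context
  fixes f :: "'a \<Rightarrow> nat" and g g' :: "'a set \<Rightarrow> nat" and m :: nat
  assumes fg: "total_coloring V (E - {{u, v}}) 9 f g"
    and m: "m \<in> {1..9}" "m \<noteq> f v" "m \<notin> g ` star (E - {{u, v}}) v"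
    and unchanged: "\<forall>e. e \<notin> recolored_edges \<longrightarrow> g' e = g e"
    and at_v: "g' ` {{u, v}, {v, w}, {v, y}, {v, z}, {v, t}} =
      insert m (g ` {{v, w}, {v, y}, {v, z}, {v, t}})"
    and at_x: "g' ` {{x, u}, {x, w}} = g ` {{x, u}, {x, w}}"
    and at_y: "g' ` {{v, y}, {w, y}} = g ` {{v, y}, {w, y}}"
    and at_t: "g' ` {{v, t}, {z, t}} = g ` {{v, t}, {z, t}}"
begin

lemma recolored_image_star_v: "g' ` star E v = insert m (g ` star (E - {{u, v}}) v)"
proof -
  define D where "D = {{v, w}, {v, y}, {v, z}, {v, t}}"
  have D: "D \<subseteq> star (E - {{u, v}}) v"
    using edges vertices_distinct by (auto simp: D_def star_def doubleton_eq_iff)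
  have "g' ` (star (E - {{u, v}}) v - D) = g ` (star (E - {{u, v}}) v - D)"
    using unchanged vertices_distinct
    by (intro image_cong) (auto simp: D_def star_def recolored_edges_def)
  moreover have "star E v = insert {u, v} D \<union> (star (E - {{u, v}}) v - D)"
    using D unfolding star_v_insert by blast
  moreover have "g' ` insert {u, v} D = insert m (g ` D)"
    using at_v by (simp only: D_def)
  ultimately have "g' ` star E v = insert m (g ` D) \<union> g ` (star (E - {{u, v}}) v - D)"
    by (simp only: image_Un)
  also have "\<dots> = insert m (g ` star (E - {{u, v}}) v)"
    using D by (simp only: Un_insert_left image_Un[symmetric] Un_Diff_cancel Un_absorb1)
  finally show ?thesis .
qed

lemma recolored_image_star_other:
  assumes "p \<notin> {u, v, w, z}"
  shows "g' ` star E p = g ` star (E - {{u, v}}) p"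
proof -
  define D where "D = {e \<in> recolored_edges. p \<in> e}"
  have "D \<subseteq> star E p"
    using edges by (auto simp: D_def recolored_edges_def star_def)
  moreover have "g' ` D = g ` D"
  proof -
    consider "p = x" | "p = y" | "p = t" | "p \<notin> {u, v, w, x, y, z, t}"
      using assms by blast
    then show ?thesis
      using at_x at_y at_t by cases (simp_all add: D_def recolored_edges_incident)
  qed
  moreover have "\<forall>e\<in>star E p - D. g' e = g e"
    using unchanged by (auto simp: D_def star_def)
  ultimately have "g' ` star E p = g ` star E p"
    by (rule image_eq_if_eq_outside)
  then show ?thesis
    using assms by (simp add: star_minus_uv)
qed

lemma recolored_star_proper:
  assumes "p \<in> V" "p \<notin> {u, w, z}"
  shows "inj_on g' (star E p)" "f p \<notin> g' ` star E p"
proof -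
  have g: "inj_on g (star (E - {{u, v}}) p)" "f p \<notin> g ` star (E - {{u, v}}) p"
    using total_coloring_minus_uv_stars(2)[OF fg] assms(1) by auto
  have finite: "finite (star E p)" "finite (star (E - {{u, v}}) p)"
    using finite_E by (auto simp: star_def)
  show "inj_on g' (star E p)"
  proof (rule eq_card_imp_inj_on[OF finite(1)])
    show "card (g' ` star E p) = card (star E p)"
    proof (cases "p = v")
      case True
      have "{u, v} \<notin> star (E - {{u, v}}) v"
        by (simp add: star_def)
      then have "card (star E v) = Suc (card (star (E - {{u, v}}) v))"
        using finite(2) True by (simp add: star_v_insert)
      moreover have "card (g' ` star E v) = Suc (card (star (E - {{u, v}}) v))"
        using g m(3) finite(2) True by (simp add: recolored_image_star_v card_image)
      ultimately show ?thesis
        using True by simp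
    next
      case False
      then show ?thesis
        using assms g by (simp add: recolored_image_star_other star_minus_uv card_image)
    qed
  qed
  show "f p \<notin> g' ` star E p"
    using assms g m(2) by (cases "p = v") (simp_all add: recolored_image_star_v recolored_image_star_other)
qed

lemma recolored_range: "\<forall>e\<in>E. g' e \<in> {1..9}"
proof
  fix e assume "e \<in> E"
  have g_range: "\<forall>e\<in>E - {{u, v}}. g e \<in> {1..9}"
    by (rule total_coloring_minus_uv_stars(1)[OF fg])
  show "g' e \<in> {1..9}"
  proof (cases "e \<in> recolored_edges")
    case True
    then obtain p where p: "p \<in> {v, x, y, t}" "e \<in> star E p"
      using edges by (auto simp: recolored_edges_def star_def)
    have "g' ` star E p \<subseteq> insert m (g ` star (E - {{u, v}}) p)"
    proof (cases "p = v")
      case True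
      then show ?thesis
        by (simp add: recolored_image_star_v)
    next
      case False
      then have "p \<notin> {u, v, w, z}"
        using p(1) vertices_distinct by auto
      then show ?thesis
        by (simp add: recolored_image_star_other subset_insertI)
    qed
    moreover have "g ` star (E - {{u, v}}) p \<subseteq> {1..9}"
      using g_range by (auto simp: star_def)
    ultimately show ?thesis
      using m(1) p(2) by blast
  next
    case False
    then show ?thesis
      using \<open>e \<in> E\<close> unchanged g_range by (auto simp: recolored_edges_def)
  qed
qed

end

lemma missing_color_at_v:
  fixes f :: "'a \<Rightarrow> nat" and g :: "'a set \<Rightarrow> nat"
  obtains m where "m \<in> {1..9}" "m \<noteq> f v" "m \<notin> g ` star (E - {{u, v}}) v"
proof -
  let ?S = "star (E - {{u, v}}) v"
  have "finite ?S"
    using finite_E by (simp add: star_def)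
  then have "finite (insert (f v) (g ` ?S))" "card (insert (f v) (g ` ?S)) < 9"
    using card_star_minus_uv_v card_image_le[of ?S g] by (auto simp: card_insert_if)
  then obtain m where "m \<in> {1..9}" "m \<notin> insert (f v) (g ` ?S)"
    by (rule exists_color_not_in)
  then show ?thesis
    using that by blast
qed

lemma colors_distinct_at_configuration:
  fixes f :: "'a \<Rightarrow> nat" and g :: "'a set \<Rightarrow> nat"
  assumes fg: "total_coloring V (E - {{u, v}}) 9 f g"
    and m: "m \<notin> g ` star (E - {{u, v}}) v"
    and ez: "star E z = {{v, z}, {z, t}, ez}" "ez \<notin> {{v, z}, {z, t}}"
  shows "distinct [g {v, w}, g {v, y}, g {v, z}, g {v, t}, m]" "g {x, u} \<noteq> g {x, w}"
    "distinct [g {v, w}, g {x, w}, g {w, y}]" "g {v, y} \<noteq> g {w, y}"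
    "distinct [g {v, z}, g {z, t}, g ez]" "g {v, t} \<noteq> g {z, t}"
proof -
  have inj: "inj_on g (star (E - {{u, v}}) p)" if "{p, q} \<in> E" for p q
    using total_coloring_minus_uv_stars(2)[OF fg] simple_graph_edge_vertices(1)[OF simple that] by blast
  have distinct_at: "distinct (map g es)"
    if "{p, q} \<in> E" "distinct es" "set es \<subseteq> star (E - {{u, v}}) p" for p q es
    using that(2,3) inj[OF that(1)] by (simp add: distinct_map inj_on_subset)
  have "ez \<in> star E z"
    using ez(1) by simp
  then have ez_edge: "ez \<in> E - {{u, v}}" "z \<in> ez"
    using vertices_distinct by (auto simp: star_def)
  have v_edges: "set [{v, w}, {v, y}, {v, z}, {v, t}] \<subseteq> star (E - {{u, v}}) v"
    using edges vertices_distinct by (auto simp: star_def doubleton_eq_iff)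
  have "distinct (map g [{v, w}, {v, y}, {v, z}, {v, t}])"
    using distinct_at[OF edges(2) _ v_edges] vertices_distinct by (simp add: doubleton_eq_iff)
  then show "distinct [g {v, w}, g {v, y}, g {v, z}, g {v, t}, m]"
    using v_edges m by auto
  show "g {x, u} \<noteq> g {x, w}"
    using distinct_at[OF edges(6), of "[{x, u}, {x, w}]"] edges vertices_distinct
    by (auto simp: star_def doubleton_eq_iff)
  show "distinct [g {v, w}, g {x, w}, g {w, y}]"
    using distinct_at[OF edges(8), of "[{v, w}, {x, w}, {w, y}]"] edges vertices_distinct
    by (auto simp: star_def doubleton_eq_iff)
  show "g {v, y} \<noteq> g {w, y}"
    using distinct_at[of y v "[{v, y}, {w, y}]"] edges vertices_distinct
    by (auto simp: star_def doubleton_eq_iff insert_commute)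
  show "distinct [g {v, z}, g {z, t}, g ez]"
    using distinct_at[OF edges(9), of "[{v, z}, {z, t}, ez]"] edges ez(2) ez_edge vertices_distinct
    by (auto simp: star_def doubleton_eq_iff)
  show "g {v, t} \<noteq> g {z, t}"
    using distinct_at[of t v "[{v, t}, {z, t}]"] edges vertices_distinct
    by (auto simp: star_def doubleton_eq_iff insert_commute)
qed

lemma edge_recoloring:
  assumes fg: "total_coloring V (E - {{u, v}}) 9 f g"
  obtains g' where "\<forall>e\<in>E. g' e \<in> {1..9}" "\<forall>p\<in>V. inj_on g' (star E p)"
    "\<forall>p\<in>V - {u, w, z}. f p \<notin> g' ` star E p"
proof -
  obtain m where m: "m \<in> {1..9}" "m \<noteq> f v" "m \<notin> g ` star (E - {{u, v}}) v"
    by (rule missing_color_at_v)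
  obtain ez where ez: "star E z = {{v, z}, {z, t}, ez}" "ez \<notin> {{v, z}, {z, t}}"
    by (rule star_z)
  obtain uv' vw' vy' vz' vt' xu' xw' wy' zt' where
    new: "{uv', vw', vy', vz', vt'} = {g {v, w}, g {v, y}, g {v, z}, g {v, t}, m}"
      "{xu', xw'} = {g {x, u}, g {x, w}}" "{vy', wy'} = {g {v, y}, g {w, y}}"
      "{vt', zt'} = {g {v, t}, g {z, t}}"
      "uv' \<noteq> xu'" "distinct [vw', xw', wy']" "distinct [vz', zt', g ez]"
    using recoloring_choice[OF colors_distinct_at_configuration[OF fg m(3) ez]] by blast
  define g' where "g' = g({u, v} := uv', {v, w} := vw', {v, y} := vy', {v, z} := vz', {v, t} := vt',
    {x, u} := xu', {x, w} := xw', {w, y} := wy', {z, t} := zt')"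
  have unchanged: "\<forall>e. e \<notin> recolored_edges \<longrightarrow> g' e = g e"
    by (simp add: g'_def recolored_edges_def)
  have "ez \<in> star E z"
    using ez(1) by simp
  then have "ez \<notin> recolored_edges"
    using ez(2) vertices_distinct by (auto simp: star_def recolored_edges_def)
  then have g'_values: "g' {u, v} = uv'" "g' {v, w} = vw'" "g' {v, y} = vy'" "g' {v, z} = vz'"
    "g' {v, t} = vt'" "g' {x, u} = xu'" "g' {x, w} = xw'" "g' {w, y} = wy'" "g' {z, t} = zt'"
    "g' ez = g ez"
    using vertices_distinct unchanged by (auto simp: g'_def doubleton_eq_iff)
  have at_v: "g' ` {{u, v}, {v, w}, {v, y}, {v, z}, {v, t}} =
      insert m (g ` {{v, w}, {v, y}, {v, z}, {v, t}})"
    using new(1) by (simp only: image_insert image_empty g'_values) (simp add: insert_commute)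
  have at_uwz: "\<forall>p\<in>{u, w, z}. inj_on g' (star E p)"
    using new(5-7) vertices_distinct
    by (auto simp: star_u star_w ez g'_values doubleton_eq_iff)
  have at_x: "g' ` {{x, u}, {x, w}} = g ` {{x, u}, {x, w}}"
    and at_y: "g' ` {{v, y}, {w, y}} = g ` {{v, y}, {w, y}}"
    and at_t: "g' ` {{v, t}, {z, t}} = g ` {{v, t}, {z, t}}"
    using new(2-4) by (simp_all only: image_insert image_empty g'_values)
  note proper = recolored_star_proper[OF fg m unchanged at_v at_x at_y at_t]
  have "\<forall>p\<in>V. inj_on g' (star E p)"
    using proper(1) at_uwz by blast
  then show ?thesis
    using that recolored_range[OF fg m unchanged at_v at_x at_y at_t] proper(2) by blast
qed

lemma colorable_if_minus_uv_colorable: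
  assumes "total_colorable V (E - {{u, v}}) 9"
  shows "total_colorable V E 9"
proof -
  obtain f g where fg: "total_coloring V (E - {{u, v}}) 9 f g"
    using assms by (auto simp: total_colorable_def)
  obtain g' where g': "\<forall>e\<in>E. g' e \<in> {1..9}" "\<forall>p\<in>V. inj_on g' (star E p)"
    "\<forall>p\<in>V - {u, w, z}. f p \<notin> g' ` star E p"
    by (rule edge_recoloring[OF fg])
  have "\<forall>p\<in>V. f p \<in> {1..9}" "\<forall>p\<in>V. \<forall>q\<in>V. adj (E - {{u, v}}) p q \<longrightarrow> f p \<noteq> f q"
    using fg by (simp_all add: total_coloring_def)
  then have "\<forall>p\<in>V - {u, w, z}. f p \<in> {1..9}"
    "\<forall>p\<in>V - {u, w, z}. \<forall>q\<in>V - {u, w, z}. adj E p q \<longrightarrow> f p \<noteq> f q"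
    by (auto simp: adj_def doubleton_eq_iff)
  moreover have "\<forall>a\<in>{u, w, z}. 2 * degree E a < 9"
    using degree_u degree_w degree_z by simp
  ultimately show ?thesis
    using total_colorable_if_recolor_independent[OF simple independent_uwz] g' by blast
qed

lemma not_minimal_counterexample: "\<not> minimal_counterexample V E"
proof
  assume mc: "minimal_counterexample V E"
  then have "total_colorable V (E - {{u, v}}) 9"
    using minimal_counterexample_subgraph_colorable edges(1) by blast
  then show False
    using colorable_if_minus_uv_colorable mc by (simp add: minimal_counterexample_def)
qed

end

theorem lemma2p14:
  fixes V :: "'a set" and E :: "'a set set"
  assumes "minimal_counterexample V E"
  shows "\<not> (\<exists>v u w y z t x. v \<in> V \<and> x \<in> V \<and> degree E v = 8 \<and>
            distinct [u, w, y, z, t] \<and>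
            adj E v u \<and> adj E v w \<and> adj E v y \<and> adj E v z \<and> adj E v t \<and>
            x \<notin> {v, u, w, y, z, t} \<and>
            degree E u = 2 \<and> degree E w = 3 \<and> degree E z = 3 \<and>
            adj E x u \<and> adj E x w \<and> adj E w y \<and> adj E z t)"
proof -
  have "\<not> degree8_configuration V E v u w y z t x" for v u w y z t x
    using degree8_configuration.not_minimal_counterexample[of V E v u w y z t x] assms by blast
  moreover have "simple_graph V E"
    using assms by (simp add: minimal_counterexample_def)
  ultimately show ?thesis
    unfolding degree8_configuration_def by blast
qed

end
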